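(* Let $\mathcal{D}_n=(Q,\Sigma,\delta,0,F)$ with $Q=\{0,\dots,n-1\}$ be a minimal complete DFA accepting a suffix-free language $L$, with empty state $n-1$, and let $T$ be its transition semigroup. Then every semiconstant transformation $(S\to q)$ belonging to $T$ satisfies $0\in S$ and $q=n-1$. Moreover, if $T$ is maximal (i.e. no minimal complete DFA with state set $Q$, initial state $0$ and empty state $n-1$ accepting a suffix-free language has a transition semigroup properly containing $T$), then every semiconstant transformation $(S\to n-1)$ with $0\in S$ belongs to $T$.
   Context: A language $L$ is suffix-free if whenever $w\in L$ and $u\in L$ with $u$ a suffix of $w$, then $u=w$. Transformations act on the right. The transition semigroup of a DFA is the semigroup of transformations of its state set generated by the transformations induced by its letters. A minimal complete DFA of a suffix-free language with $n\ge2$ states has exactly one empty state (a state from which no final state is reachable), labeled $n-1$. A transformation $t$ of $Q$ is semiconstant, written $(S\to q)$, if for some nonempty $S\subseteq Q$ and $q\in Q$ it maps every state of $S$ to $q$ and fixes every state of $Q\setminus S$. *)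

theory Defs
  imports Main "HOL-Library.Sublist"
begin

text \<open>A DFA with state set Q = {0..<n}, alphabet Sigma, transition function
  delta (delta a q is the state reached from q by letter a), initial state 0,
  final states F.\<close>

fun delta_hat :: "('a \<Rightarrow> nat \<Rightarrow> nat) \<Rightarrow> nat \<Rightarrow> 'a list \<Rightarrow> nat" where
  "delta_hat \<delta> q [] = q"
| "delta_hat \<delta> q (a # w) = delta_hat \<delta> (\<delta> a q) w"

definition complete_dfa :: "nat \<Rightarrow> 'a set \<Rightarrow> ('a \<Rightarrow> nat \<Rightarrow> nat) \<Rightarrow> nat set \<Rightarrow> bool" where
  "complete_dfa n \<Sigma> \<delta> F \<longleftrightarrow> finite \<Sigma> \<and> 0 < n \<and> F \<subseteq> {..<n} \<and>
     (\<forall>a\<in>\<Sigma>. \<forall>q<n. \<delta> a q < n)"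

definition dfa_lang :: "'a set \<Rightarrow> ('a \<Rightarrow> nat \<Rightarrow> nat) \<Rightarrow> nat set \<Rightarrow> 'a list set" where
  "dfa_lang \<Sigma> \<delta> F = {w. w \<in> lists \<Sigma> \<and> delta_hat \<delta> 0 w \<in> F}"

definition minimal_dfa :: "nat \<Rightarrow> 'a set \<Rightarrow> ('a \<Rightarrow> nat \<Rightarrow> nat) \<Rightarrow> nat set \<Rightarrow> bool" where
  "minimal_dfa n \<Sigma> \<delta> F \<longleftrightarrow>
     (\<forall>q<n. \<exists>w\<in>lists \<Sigma>. delta_hat \<delta> 0 w = q) \<and>
     (\<forall>p<n. \<forall>q<n. p \<noteq> q \<longrightarrow>
        (\<exists>w\<in>lists \<Sigma>. (delta_hat \<delta> p w \<in> F) \<noteq> (delta_hat \<delta> q w \<in> F)))"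

definition empty_state :: "nat \<Rightarrow> 'a set \<Rightarrow> ('a \<Rightarrow> nat \<Rightarrow> nat) \<Rightarrow> nat set \<Rightarrow> nat \<Rightarrow> bool" where
  "empty_state n \<Sigma> \<delta> F q \<longleftrightarrow> q < n \<and> (\<forall>w\<in>lists \<Sigma>. delta_hat \<delta> q w \<notin> F)"

definition suffix_free :: "'a list set \<Rightarrow> bool" where
  "suffix_free L \<longleftrightarrow> (\<forall>w\<in>L. \<forall>u\<in>L. suffix u w \<longrightarrow> u = w)"

definition sf_dfa :: "nat \<Rightarrow> 'a set \<Rightarrow> ('a \<Rightarrow> nat \<Rightarrow> nat) \<Rightarrow> nat set \<Rightarrow> bool" where
  "sf_dfa n \<Sigma> \<delta> F \<longleftrightarrow> complete_dfa n \<Sigma> \<delta> F \<and> minimal_dfa n \<Sigma> \<delta> F \<and>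
     empty_state n \<Sigma> \<delta> F (n - 1) \<and> suffix_free (dfa_lang \<Sigma> \<delta> F)"

text \<open>Transformations of Q are represented extensionally as functions
  nat => nat that fix every number >= n. The transformation induced by a
  word w (acting on the right: letters applied left to right).\<close>
definition word_tr :: "nat \<Rightarrow> ('a \<Rightarrow> nat \<Rightarrow> nat) \<Rightarrow> 'a list \<Rightarrow> nat \<Rightarrow> nat" where
  "word_tr n \<delta> w = (\<lambda>q. if q < n then delta_hat \<delta> q w else q)"

text \<open>Transition semigroup: generated by the letter transformations, i.e. the
  transformations induced by the nonempty words.\<close>
definition trans_sg :: "nat \<Rightarrow> 'a set \<Rightarrow> ('a \<Rightarrow> nat \<Rightarrow> nat) \<Rightarrow> (nat \<Rightarrow> nat) set" where
  "trans_sg n \<Sigma> \<delta> = {word_tr n \<delta> w | w. w \<in> lists \<Sigma> \<and> w \<noteq> []}"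

definition semiconst :: "nat set \<Rightarrow> nat \<Rightarrow> nat \<Rightarrow> nat" where
  "semiconst S q = (\<lambda>p. if p \<in> S then q else p)"

text \<open>Maximality of the transition semigroup among all such DFAs with state set
  {0..<n}, initial state 0 and empty state n-1 (over any finite alphabet,
  encoded as a finite set of naturals).\<close>
definition maximal_sg :: "nat \<Rightarrow> (nat \<Rightarrow> nat) set \<Rightarrow> bool" where
  "maximal_sg n T \<longleftrightarrow>
     (\<forall>(\<Sigma>'::nat set) \<delta>' F'. sf_dfa n \<Sigma>' \<delta>' F' \<longrightarrow> \<not> (T \<subset> trans_sg n \<Sigma>' \<delta>'))"

end

theory Submission
  imports Defs
begin

text \<open>If a nonempty word w sent some state p to the initial state, then for u reaching p
  and v accepted from 0, both u w v and its proper suffix v would be accepted; the same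
  argument with w v in place of v shows that a nonempty word can merge a state p \<noteq> 0 with 0
  only in the empty state. Hence a semiconstant (S \<rightarrow> q) in T must move 0, i.e. 0 \<in> S, and
  then merges q \<noteq> 0 with 0, so q = n - 1. Conversely, adjoining to the DFA a new letter
  acting as (S \<rightarrow> n - 1) with 0 \<in> S keeps it minimal and suffix-free: that letter sends
  0 to the empty state and otherwise only either does nothing or kills the run, so it can be
  erased from every accepted word. Maximality of T then forces (S \<rightarrow> n - 1) \<in> T.\<close>

lemma delta_hat_append: "delta_hat \<delta> q (u @ w) = delta_hat \<delta> (delta_hat \<delta> q u) w"
  by (induction u arbitrary: q) auto

lemma delta_hat_fixpoint: "(\<And>a. a \<in> set w \<Longrightarrow> \<delta> a q = q) \<Longrightarrow> delta_hat \<delta> q w = q"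
  by (induction w) auto

lemma delta_hat_lessThan:
  "complete_dfa n \<Sigma> \<delta> F \<Longrightarrow> q < n \<Longrightarrow> w \<in> lists \<Sigma> \<Longrightarrow> delta_hat \<delta> q w < n"
  by (induction w arbitrary: q) (auto simp: complete_dfa_def)

lemma suffix_free_prefix_Nil:
  assumes "suffix_free L" "x @ u \<in> L" "u \<in> L"
  shows "x = []"
  using assms unfolding suffix_free_def by (metis append_self_conv2 suffix_appendI suffix_order.refl)

lemma sf_dfa_reachable:
  assumes "sf_dfa n \<Sigma> \<delta> F" "q < n"
  obtains u where "u \<in> lists \<Sigma>" "delta_hat \<delta> 0 u = q"
  using assms unfolding sf_dfa_def minimal_dfa_def by blast

lemma sf_dfa_empty_state:
  assumes "sf_dfa n \<Sigma> \<delta> F" "w \<in> lists \<Sigma>"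
  shows "delta_hat \<delta> (n - 1) w \<notin> F"
  using assms by (simp add: sf_dfa_def empty_state_def)

lemma sf_dfa_live:
  assumes sf: "sf_dfa n \<Sigma> \<delta> F" and "q < n" "q \<noteq> n - 1"
  obtains v where "v \<in> lists \<Sigma>" "delta_hat \<delta> q v \<in> F"
proof -
  have "n - 1 < n" using sf by (simp add: sf_dfa_def empty_state_def)
  then obtain v where "v \<in> lists \<Sigma>" "(delta_hat \<delta> q v \<in> F) \<noteq> (delta_hat \<delta> (n - 1) v \<in> F)"
    using assms unfolding sf_dfa_def minimal_dfa_def by blast
  with sf_dfa_empty_state[OF sf] that show thesis by blast
qed

lemma sf_dfa_letter_fixes_empty:
  assumes sf: "sf_dfa n \<Sigma> \<delta> F" and a: "a \<in> \<Sigma>"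
  shows "\<delta> a (n - 1) = n - 1"
proof (rule ccontr)
  assume ne: "\<delta> a (n - 1) \<noteq> n - 1"
  have "\<delta> a (n - 1) < n"
    using sf a by (auto simp: sf_dfa_def complete_dfa_def empty_state_def)
  then obtain v where "v \<in> lists \<Sigma>" "delta_hat \<delta> (n - 1) (a # v) \<in> F"
    using sf_dfa_live[OF sf _ ne] by auto
  with a sf_dfa_empty_state[OF sf, of "a # v"] show False by simp
qed

lemma sf_dfa_no_return_to_initial:
  assumes "n \<ge> 2" and sf: "sf_dfa n \<Sigma> \<delta> F" and "p < n" "w \<in> lists \<Sigma>" "w \<noteq> []"
  shows "delta_hat \<delta> p w \<noteq> 0"
proof
  assume returns: "delta_hat \<delta> p w = 0"
  obtain u where u: "u \<in> lists \<Sigma>" "delta_hat \<delta> 0 u = p"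
    using sf_dfa_reachable[OF sf \<open>p < n\<close>] .
  obtain v where v: "v \<in> lists \<Sigma>" "delta_hat \<delta> 0 v \<in> F"
    using sf_dfa_live[OF sf, of 0] \<open>n \<ge> 2\<close> by auto
  have "(u @ w) @ v \<in> dfa_lang \<Sigma> \<delta> F" "v \<in> dfa_lang \<Sigma> \<delta> F"
    using u v returns \<open>w \<in> lists \<Sigma>\<close> by (auto simp: dfa_lang_def delta_hat_append)
  then have "u @ w = []"
    using sf suffix_free_prefix_Nil unfolding sf_dfa_def by blast
  with \<open>w \<noteq> []\<close> show False by simp
qed

lemma sf_dfa_merge_with_initial:
  assumes sf: "sf_dfa n \<Sigma> \<delta> F" and "p < n" "p \<noteq> 0" "w \<in> lists \<Sigma>"
    and merge: "delta_hat \<delta> 0 w = delta_hat \<delta> p w"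
  shows "delta_hat \<delta> p w = n - 1"
proof (rule ccontr)
  assume "delta_hat \<delta> p w \<noteq> n - 1"
  moreover have "delta_hat \<delta> p w < n"
    using sf assms(2,4) by (intro delta_hat_lessThan) (auto simp: sf_dfa_def)
  ultimately obtain v where v: "v \<in> lists \<Sigma>" "delta_hat \<delta> (delta_hat \<delta> p w) v \<in> F"
    using sf_dfa_live[OF sf] by blast
  obtain u where u: "u \<in> lists \<Sigma>" "delta_hat \<delta> 0 u = p"
    using sf_dfa_reachable[OF sf \<open>p < n\<close>] .
  have "u @ (w @ v) \<in> dfa_lang \<Sigma> \<delta> F" "w @ v \<in> dfa_lang \<Sigma> \<delta> F"
    using u v \<open>w \<in> lists \<Sigma>\<close> merge by (auto simp: dfa_lang_def delta_hat_append)
  then have "u = []"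
    using sf suffix_free_prefix_Nil unfolding sf_dfa_def by blast
  with u \<open>p \<noteq> 0\<close> show False by simp
qed

lemma semiconst_in_trans_sg_sf_dfa:
  assumes "n \<ge> 2" and sf: "sf_dfa n \<Sigma> \<delta> F" and "q < n"
    and "semiconst S q \<in> trans_sg n \<Sigma> \<delta>"
  shows "0 \<in> S \<and> q = n - 1"
proof -
  obtain w where w: "w \<in> lists \<Sigma>" "w \<noteq> []" "semiconst S q = word_tr n \<delta> w"
    using assms(4) by (auto simp: trans_sg_def)
  have run: "delta_hat \<delta> p w = semiconst S q p" if "p < n" for p
    using w(3) that by (simp add: fun_eq_iff word_tr_def)
  have moves_initial: "delta_hat \<delta> 0 w \<noteq> 0"
    using sf_dfa_no_return_to_initial[OF assms(1,2) _ w(1,2)] \<open>n \<ge> 2\<close> by simp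
  then have "0 \<in> S"
    using run[of 0] \<open>n \<ge> 2\<close> by (auto simp: semiconst_def split: if_splits)
  then have "delta_hat \<delta> 0 w = q"
    using run[of 0] \<open>n \<ge> 2\<close> by (simp add: semiconst_def)
  moreover have "delta_hat \<delta> q w = q"
    using run[OF \<open>q < n\<close>] by (simp add: semiconst_def)
  ultimately have "delta_hat \<delta> q w = n - 1"
    using sf_dfa_merge_with_initial[OF sf \<open>q < n\<close> _ w(1)] moves_initial by simp
  with \<open>0 \<in> S\<close> \<open>delta_hat \<delta> q w = q\<close> show ?thesis by simp
qed

text \<open>Maximality is tested against DFAs over alphabets of naturals, so the letters of \<open>\<Sigma>\<close>
  are renamed to \<open>0, \<dots>, k - 1\<close> via \<open>g\<close>; every further letter acts as \<open>e\<close>.\<close>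

definition extend_letters ::
    "nat \<Rightarrow> (nat \<Rightarrow> 'a) \<Rightarrow> ('a \<Rightarrow> nat \<Rightarrow> nat) \<Rightarrow> (nat \<Rightarrow> nat) \<Rightarrow> nat \<Rightarrow> nat \<Rightarrow> nat" where
  "extend_letters k g \<delta> e = (\<lambda>c. if c < k then \<delta> (g c) else e)"

lemma delta_hat_extend_letters:
  "set w \<subseteq> {..<k} \<Longrightarrow> delta_hat (extend_letters k g \<delta> e) p w = delta_hat \<delta> p (map g w)"
  by (induction w arbitrary: p) (auto simp: extend_letters_def)

lemma extend_letters_encode:
  assumes "g ` {..<k} = \<Sigma>" "w \<in> lists \<Sigma>"
  obtains w' where "w' \<in> lists {..k}" "length w' = length w"
    "\<And>p. delta_hat (extend_letters k g \<delta> e) p w' = delta_hat \<delta> p w"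
proof -
  obtain w' where "w' \<in> lists {..<k}" "w = map g w'"
    using assms lists_image[of g "{..<k}"] by blast
  with delta_hat_extend_letters[of w' k] that show thesis by fastforce
qed

text \<open>A letter acting as (S \<rightarrow> z) either does nothing or sends the run to z, where it stays;
  so on runs not ending in z all such letters can be erased.\<close>

lemma delta_hat_extend_letters_semiconst:
  assumes "\<And>c. c \<in> set w \<Longrightarrow> c < k \<Longrightarrow> \<delta> (g c) z = z"
    and "delta_hat (extend_letters k g \<delta> (semiconst S z)) p w \<noteq> z"
  shows "delta_hat (extend_letters k g \<delta> (semiconst S z)) p w
           = delta_hat \<delta> p (map g (filter (\<lambda>c. c < k) w))"
  using assms
proof (induction w arbitrary: p)
  case Nil
  then show ?case by simp
next
  case (Cons c w)
  let ?\<delta>' = "extend_letters k g \<delta> (semiconst S z)"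
  show ?case
  proof (cases "c \<ge> k \<and> p \<in> S")
    case True
    have "delta_hat ?\<delta>' z w = z"
      using Cons.prems(1) by (intro delta_hat_fixpoint) (auto simp: extend_letters_def semiconst_def)
    with True Cons.prems(2) show ?thesis by (simp add: extend_letters_def semiconst_def)
  next
    case False
    with Cons show ?thesis by (auto simp: extend_letters_def semiconst_def)
  qed
qed

lemma suffix_free_extend_letters_semiconst:
  assumes sf: "sf_dfa n \<Sigma> \<delta> F" and g: "g ` {..<k} = \<Sigma>" and "0 \<in> S"
  shows "suffix_free (dfa_lang {..k} (extend_letters k g \<delta> (semiconst S (n - 1))) F)"
    (is "suffix_free ?L")
proof -
  let ?\<delta>' = "extend_letters k g \<delta> (semiconst S (n - 1))"
  let ?erase = "\<lambda>w. map g (filter (\<lambda>c. c < k) w)"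
  have erase: "?erase w \<in> dfa_lang \<Sigma> \<delta> F" if "w \<in> ?L" for w
  proof -
    have "delta_hat ?\<delta>' 0 w \<noteq> n - 1"
      using that sf_dfa_empty_state[OF sf, of "[]"] by (auto simp: dfa_lang_def)
    then have "delta_hat ?\<delta>' 0 w = delta_hat \<delta> 0 (?erase w)"
      using sf_dfa_letter_fixes_empty[OF sf] g
      by (intro delta_hat_extend_letters_semiconst) auto
    with that g show ?thesis by (auto simp: dfa_lang_def)
  qed
  have first_letter: "c < k" if "(c # x) @ u \<in> ?L" for c x u
  proof (rule ccontr)
    assume "\<not> c < k"
    then have "delta_hat ?\<delta>' 0 ((c # x) @ u) = delta_hat ?\<delta>' (n - 1) (x @ u)"
      using \<open>0 \<in> S\<close> by (simp add: extend_letters_def semiconst_def)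
    also have "\<dots> = n - 1"
      using sf_dfa_letter_fixes_empty[OF sf] g
      by (intro delta_hat_fixpoint) (auto simp: extend_letters_def semiconst_def)
    finally show False
      using that sf_dfa_empty_state[OF sf, of "[]"] by (simp add: dfa_lang_def)
  qed
  show ?thesis
    unfolding suffix_free_def
  proof (intro ballI impI)
    fix w u assume "w \<in> ?L" "u \<in> ?L" "suffix u w"
    then obtain x where x: "w = x @ u" "x @ u \<in> ?L" by (auto simp: suffix_def)
    show "u = w"
    proof (cases x)
      case (Cons c x')
      with x have "?erase x @ ?erase u \<in> dfa_lang \<Sigma> \<delta> F"
        using erase by fastforce
      then have "?erase x = []"
        using sf erase[OF \<open>u \<in> ?L\<close>] suffix_free_prefix_Nil unfolding sf_dfa_def by blast
      with Cons first_letter x(2) show ?thesis by simp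
    qed (use x in simp)
  qed
qed

lemma sf_dfa_extend_letters_semiconst:
  assumes sf: "sf_dfa n \<Sigma> \<delta> F" and g: "g ` {..<k} = \<Sigma>" and "0 \<in> S"
  shows "sf_dfa n {..k} (extend_letters k g \<delta> (semiconst S (n - 1))) F"
proof -
  let ?\<delta>' = "extend_letters k g \<delta> (semiconst S (n - 1))"
  have "complete_dfa n \<Sigma> \<delta> F" "minimal_dfa n \<Sigma> \<delta> F"
    using sf by (auto simp: sf_dfa_def)
  then have complete: "complete_dfa n {..k} ?\<delta>' F"
    using g by (auto simp: complete_dfa_def extend_letters_def semiconst_def)
  have minimal: "minimal_dfa n {..k} ?\<delta>' F"
    unfolding minimal_dfa_def
  proof (intro conjI allI impI)
    fix q assume "q < n"
    then obtain u where "u \<in> lists \<Sigma>" "delta_hat \<delta> 0 u = q"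
      using sf_dfa_reachable[OF sf] by blast
    then show "\<exists>w\<in>lists {..k}. delta_hat ?\<delta>' 0 w = q"
      using extend_letters_encode[OF g] by metis
  next
    fix p q assume "p < n" "q < n" "p \<noteq> q"
    then obtain u where "u \<in> lists \<Sigma>" "(delta_hat \<delta> p u \<in> F) \<noteq> (delta_hat \<delta> q u \<in> F)"
      using \<open>minimal_dfa n \<Sigma> \<delta> F\<close> unfolding minimal_dfa_def by blast
    then show "\<exists>w\<in>lists {..k}. (delta_hat ?\<delta>' p w \<in> F) \<noteq> (delta_hat ?\<delta>' q w \<in> F)"
      using extend_letters_encode[OF g] by metis
  qed
  have "delta_hat ?\<delta>' (n - 1) w = n - 1" for w
    using sf_dfa_letter_fixes_empty[OF sf] g
    by (intro delta_hat_fixpoint) (auto simp: extend_letters_def semiconst_def)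
  then have "empty_state n {..k} ?\<delta>' F (n - 1)"
    using complete sf_dfa_empty_state[OF sf, of "[]"] by (simp add: empty_state_def complete_dfa_def)
  with complete minimal suffix_free_extend_letters_semiconst[OF assms] show ?thesis
    by (simp add: sf_dfa_def)
qed

lemma trans_sg_extend_letters:
  assumes "g ` {..<k} = \<Sigma>"
  shows "trans_sg n \<Sigma> \<delta> \<subseteq> trans_sg n {..k} (extend_letters k g \<delta> e)"
proof
  fix t assume "t \<in> trans_sg n \<Sigma> \<delta>"
  then obtain w where w: "w \<in> lists \<Sigma>" "w \<noteq> []" "t = word_tr n \<delta> w"
    by (auto simp: trans_sg_def)
  then obtain w' where "w' \<in> lists {..k}" "w' \<noteq> []"
    "\<And>p. delta_hat (extend_letters k g \<delta> e) p w' = delta_hat \<delta> p w"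
    using extend_letters_encode[OF assms] by (metis length_0_conv)
  then have "t = word_tr n (extend_letters k g \<delta> e) w'"
    using w(3) by (simp add: word_tr_def fun_eq_iff)
  with \<open>w' \<in> lists {..k}\<close> \<open>w' \<noteq> []\<close>
  show "t \<in> trans_sg n {..k} (extend_letters k g \<delta> e)"
    unfolding trans_sg_def by blast
qed

lemma semiconst_in_trans_sg_extend_letters:
  assumes "S \<subseteq> {..<n}"
  shows "semiconst S z \<in> trans_sg n {..k} (extend_letters k g \<delta> (semiconst S z))"
proof -
  have "semiconst S z = word_tr n (extend_letters k g \<delta> (semiconst S z)) [k]"
    using assms by (auto simp: fun_eq_iff word_tr_def extend_letters_def semiconst_def)
  then show ?thesis by (auto simp: trans_sg_def)
qed

lemma maximal_sg_semiconst_in_trans_sg: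
  assumes sf: "sf_dfa n \<Sigma> \<delta> F" and max: "maximal_sg n (trans_sg n \<Sigma> \<delta>)"
    and "S \<subseteq> {..<n}" "0 \<in> S"
  shows "semiconst S (n - 1) \<in> trans_sg n \<Sigma> \<delta>"
proof -
  have "finite \<Sigma>" using sf by (simp add: sf_dfa_def complete_dfa_def)
  then obtain k and g :: "nat \<Rightarrow> 'a" where g: "g ` {..<k} = \<Sigma>"
    using ex_bij_betw_nat_finite by (metis atLeast0LessThan bij_betw_imp_surj_on)
  let ?\<delta>' = "extend_letters k g \<delta> (semiconst S (n - 1))"
  have "\<not> trans_sg n \<Sigma> \<delta> \<subset> trans_sg n {..k} ?\<delta>'"
    using max sf_dfa_extend_letters_semiconst[OF sf g \<open>0 \<in> S\<close>] unfolding maximal_sg_def by blast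
  then have "trans_sg n {..k} ?\<delta>' = trans_sg n \<Sigma> \<delta>"
    using trans_sg_extend_letters[OF g] by blast
  with semiconst_in_trans_sg_extend_letters[OF \<open>S \<subseteq> {..<n}\<close>] show ?thesis by metis
qed

theorem lemma5:
  fixes n :: nat and \<Sigma> :: "'a set" and \<delta> :: "'a \<Rightarrow> nat \<Rightarrow> nat" and F :: "nat set"
  assumes "n \<ge> 2"
    and "sf_dfa n \<Sigma> \<delta> F"
  shows "(\<forall>S q. S \<noteq> {} \<and> S \<subseteq> {..<n} \<and> q < n \<and> semiconst S q \<in> trans_sg n \<Sigma> \<delta>
              \<longrightarrow> 0 \<in> S \<and> q = n - 1)
       \<and> (maximal_sg n (trans_sg n \<Sigma> \<delta>) \<longrightarrow>
            (\<forall>S. S \<noteq> {} \<and> S \<subseteq> {..<n} \<and> 0 \<in> S \<longrightarrow> semiconst S (n - 1) \<in> trans_sg n \<Sigma> \<delta>))"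
  using semiconst_in_trans_sg_sf_dfa[OF assms] maximal_sg_semiconst_in_trans_sg[OF assms(2)]
  by blast

end
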